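(* An elementary pair $M\prec N$ of models of Presburger arithmetic is stably embedded if and only if $N$ is an end-extension of $M$. In particular, the class of stably embedded pairs of models of Presburger arithmetic is elementary in the language of pairs $\mathcal L_P$.
   Context: The pair $M\prec N$ is stably embedded if for every $\mathcal L(N)$-definable $X\subseteq N^n$, $X\cap M^n$ is $\mathcal L(M)$-definable. $N$ is an end-extension of $M$ if no element of $N\setminus M$ lies between two elements of $M$ (every element of $N\setminus M$ is above all of $M$ or below all of $M$). $\mathcal L_P$ extends the Presburger language by a unary predicate $P$ interpreted as $M$. *)

theory Defs
  imports Main
begin

text \<open>The constructor PP is the extra unary
  predicate of the pair language L_P; an L-formula is one not using PP.\<close>

datatype ptm = PVar nat | PZero | POne | PAdd ptm ptm | PNeg ptm

datatype pfm = PEq ptm ptm | PLess ptm ptm | PP ptm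
  | PNot pfm | PAnd pfm pfm | PEx nat pfm

record 'a pstruct =
  pdom :: "'a set"
  padd :: "'a \<Rightarrow> 'a \<Rightarrow> 'a"
  pneg :: "'a \<Rightarrow> 'a"
  pzero :: 'a
  pone :: 'a
  pless :: "'a \<Rightarrow> 'a \<Rightarrow> bool"

fun tvars :: "ptm \<Rightarrow> nat set" where
  "tvars (PVar i) = {i}"
| "tvars PZero = {}"
| "tvars POne = {}"
| "tvars (PAdd s t) = tvars s \<union> tvars t"
| "tvars (PNeg t) = tvars t"

fun fv :: "pfm \<Rightarrow> nat set" where
  "fv (PEq s t) = tvars s \<union> tvars t"
| "fv (PLess s t) = tvars s \<union> tvars t"
| "fv (PP t) = tvars t"
| "fv (PNot f) = fv f"
| "fv (PAnd f g) = fv f \<union> fv g"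
| "fv (PEx i f) = fv f - {i}"

fun pure :: "pfm \<Rightarrow> bool" where
  "pure (PEq s t) = True"
| "pure (PLess s t) = True"
| "pure (PP t) = False"
| "pure (PNot f) = pure f"
| "pure (PAnd f g) = (pure f \<and> pure g)"
| "pure (PEx i f) = pure f"

fun teval :: "'a pstruct \<Rightarrow> (nat \<Rightarrow> 'a) \<Rightarrow> ptm \<Rightarrow> 'a" where
  "teval S e (PVar i) = e i"
| "teval S e PZero = pzero S"
| "teval S e POne = pone S"
| "teval S e (PAdd s t) = padd S (teval S e s) (teval S e t)"
| "teval S e (PNeg t) = pneg S (teval S e t)"

fun sat :: "'a pstruct \<Rightarrow> 'a set \<Rightarrow> (nat \<Rightarrow> 'a) \<Rightarrow> pfm \<Rightarrow> bool" where
  "sat S P e (PEq s t) = (teval S e s = teval S e t)"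
| "sat S P e (PLess s t) = pless S (teval S e s) (teval S e t)"
| "sat S P e (PP t) = (teval S e t \<in> P)"
| "sat S P e (PNot f) = (\<not> sat S P e f)"
| "sat S P e (PAnd f g) = (sat S P e f \<and> sat S P e g)"
| "sat S P e (PEx i f) = (\<exists>x\<in>pdom S. sat S P (e(i := x)) f)"

definition is_pstruct :: "'a pstruct \<Rightarrow> bool" where
  "is_pstruct S \<longleftrightarrow> pdom S \<noteq> {} \<and> pzero S \<in> pdom S \<and> pone S \<in> pdom S
     \<and> (\<forall>x\<in>pdom S. \<forall>y\<in>pdom S. padd S x y \<in> pdom S)
     \<and> (\<forall>x\<in>pdom S. pneg S x \<in> pdom S)"

definition Zstruct :: "int pstruct" where
  "Zstruct = \<lparr>pdom = UNIV, padd = (+), pneg = uminus, pzero = 0, pone = 1, pless = (<)\<rparr>"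

text \<open>A model of Presburger arithmetic: a structure satisfying exactly the L-sentences
  true in Z, i.e. a model of the complete theory Th(Z,+,-,0,1,<).\<close>
definition presburger_model :: "'a pstruct \<Rightarrow> bool" where
  "presburger_model S \<longleftrightarrow> is_pstruct S \<and>
     (\<forall>\<phi>. pure \<phi> \<and> fv \<phi> = {} \<longrightarrow>
        ((\<forall>e. range e \<subseteq> pdom S \<longrightarrow> sat S {} e \<phi>) \<longleftrightarrow> sat Zstruct {} (\<lambda>_. 0) \<phi>))"

definition restr :: "'a pstruct \<Rightarrow> 'a set \<Rightarrow> 'a pstruct" where
  "restr S M = S\<lparr>pdom := M\<rparr>"

definition elem_sub :: "'a set \<Rightarrow> 'a pstruct \<Rightarrow> bool" where
  "elem_sub M N \<longleftrightarrow> M \<subseteq> pdom N \<and> is_pstruct (restr N M) \<and>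
     (\<forall>\<phi> e. pure \<phi> \<and> range e \<subseteq> M \<longrightarrow> (sat (restr N M) {} e \<phi> \<longleftrightarrow> sat N {} e \<phi>))"

definition presburger_pair :: "'a set \<Rightarrow> 'a pstruct \<Rightarrow> bool" where
  "presburger_pair M N \<longleftrightarrow> presburger_model N \<and> presburger_model (restr N M) \<and> elem_sub M N"

text \<open>Definability with parameters from A: n-tuples are lists of length n; the formula's
  variables 0..n-1 are the tuple coordinates, variables n..n+k-1 the parameters.\<close>
definition definable :: "'a pstruct \<Rightarrow> 'a set \<Rightarrow> nat \<Rightarrow> 'a list set \<Rightarrow> bool" where
  "definable S A n X \<longleftrightarrow> (\<exists>\<phi> ps. pure \<phi> \<and> set ps \<subseteq> A \<and> fv \<phi> \<subseteq> {..<n + length ps} \<and>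
     X = {xs. length xs = n \<and> set xs \<subseteq> pdom S \<and> sat S {} (\<lambda>i. (xs @ ps) ! i) \<phi>})"

definition stably_embedded :: "'a set \<Rightarrow> 'a pstruct \<Rightarrow> bool" where
  "stably_embedded M N \<longleftrightarrow> (\<forall>n X. definable N (pdom N) n X \<longrightarrow>
     definable (restr N M) M n {xs \<in> X. set xs \<subseteq> M})"

definition end_extension :: "'a set \<Rightarrow> 'a pstruct \<Rightarrow> bool" where
  "end_extension M N \<longleftrightarrow> (\<forall>y \<in> pdom N - M. (\<forall>m\<in>M. pless N m y) \<or> (\<forall>m\<in>M. pless N y m))"

end

theory Submission
  imports Defs "HOL-Decision_Procs.Cooper"
begin

(* A model of Presburger arithmetic satisfies every sentence true in Z, so Cooper's
   quantifier elimination holds in it: a formula with parameters is equivalent to a Boolean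
   combination of atoms s(x) + b < 0, s(x) + b = 0 and k | s(x) + b, where s(x) is a term in
   the free variables and b a term in the parameters. If N end-extends M and b lies outside
   M, the first two atoms are constant on M, since b lies beyond M, and the third only
   depends on the residue of b modulo k, which lies in M; so the trace on M of an
   N-definable set is M-definable. Conversely, if some y in N - M lies strictly between
   elements of M, stable embeddedness makes the cut {x \<in> M. x < y} definable in M. It is
   nonempty with nonempty complement, so by the discrete intermediate value principle,
   valid in Z and hence in M, it contains some d with d + 1 outside it; then d < y \<le> d + 1
   forces y = d + 1 \<in> M. Being an end extension is expressed by a single L_P-sentence. *)

(* Frees the names T, F, A, E and C for variables, as in the main theorem. *)
hide_const (open) Cooper.T Cooper.F Cooper.A Cooper.E Cooper.C

lemma teval_cong: "(\<And>i. i \<in> tvars t \<Longrightarrow> e i = e' i) \<Longrightarrow> teval S e t = teval S e' t"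
  by (induction t) auto

lemma sat_cong: "(\<And>i. i \<in> fv \<phi> \<Longrightarrow> e i = e' i) \<Longrightarrow> sat S P e \<phi> = sat S P e' \<phi>"
proof (induction \<phi> arbitrary: e e')
  case (PEx i \<phi>)
  have "sat S P (e(i := x)) \<phi> = sat S P (e'(i := x)) \<phi>" for x
    by (rule PEx.IH) (use PEx.prems in auto)
  then show ?case by simp
next
  case (PEq s t)
  then show ?case using teval_cong[of s e e' S] teval_cong[of t e e' S] by auto
next
  case (PLess s t)
  then show ?case using teval_cong[of s e e' S] teval_cong[of t e e' S] by auto
next
  case (PP t)
  then show ?case using teval_cong[of t e e' S] by auto
next
  case (PNot \<phi>)
  have "sat S P e \<phi> = sat S P e' \<phi>"
    by (rule PNot.IH) (use PNot.prems in simp)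
  then show ?case by simp
next
  case (PAnd \<phi> \<psi>)
  have "sat S P e \<phi> = sat S P e' \<phi>" "sat S P e \<psi> = sat S P e' \<psi>"
    by (rule PAnd.IH; use PAnd.prems in simp)+
  then show ?case by simp
qed

lemma finite_tvars: "finite (tvars t)"
  by (induction t) auto

lemma finite_fv: "finite (fv \<phi>)"
  by (induction \<phi>) (auto simp: finite_tvars)

definition list_env :: "'a \<Rightarrow> 'a list \<Rightarrow> nat \<Rightarrow> 'a" where
  "list_env z xs i = (if i < length xs then xs ! i else z)"

lemma range_list_env: "set xs \<subseteq> A \<Longrightarrow> z \<in> A \<Longrightarrow> range (list_env z xs) \<subseteq> A"
  by (auto simp: list_env_def)

lemma sat_list_env: "fv \<phi> \<subseteq> {..<length xs} \<Longrightarrow> sat S P (list_env z xs) \<phi> = sat S P (\<lambda>i. xs ! i) \<phi>"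
  by (rule sat_cong) (auto simp: list_env_def)

fun rename_tm :: "(nat \<Rightarrow> nat) \<Rightarrow> ptm \<Rightarrow> ptm" where
  "rename_tm f (PVar i) = PVar (f i)"
| "rename_tm f PZero = PZero"
| "rename_tm f POne = POne"
| "rename_tm f (PAdd s t) = PAdd (rename_tm f s) (rename_tm f t)"
| "rename_tm f (PNeg t) = PNeg (rename_tm f t)"

fun rename_fm :: "(nat \<Rightarrow> nat) \<Rightarrow> pfm \<Rightarrow> pfm" where
  "rename_fm f (PEq s t) = PEq (rename_tm f s) (rename_tm f t)"
| "rename_fm f (PLess s t) = PLess (rename_tm f s) (rename_tm f t)"
| "rename_fm f (PP t) = PP (rename_tm f t)"
| "rename_fm f (PNot \<phi>) = PNot (rename_fm f \<phi>)"
| "rename_fm f (PAnd \<phi> \<psi>) = PAnd (rename_fm f \<phi>) (rename_fm f \<psi>)"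
| "rename_fm f (PEx i \<phi>) = PEx (f i) (rename_fm f \<phi>)"

lemma teval_rename_tm: "teval S e (rename_tm f t) = teval S (e \<circ> f) t"
  by (induction t) auto

lemma tvars_rename_tm: "tvars (rename_tm f t) = f ` tvars t"
  by (induction t) auto

lemma sat_rename_fm: "inj f \<Longrightarrow> sat S P e (rename_fm f \<phi>) = sat S P (e \<circ> f) \<phi>"
proof (induction \<phi> arbitrary: e)
  case (PEx i \<phi>)
  have "(e(f i := x)) \<circ> f = (e \<circ> f)(i := x)" for x
    using PEx.prems by (auto simp: fun_eq_iff inj_eq)
  then have "sat S P (e(f i := x)) (rename_fm f \<phi>) = sat S P ((e \<circ> f)(i := x)) \<phi>" for x
    using PEx by metis
  then show ?case by (simp only: rename_fm.simps sat.simps)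
qed (auto simp: teval_rename_tm)

lemma pure_rename_fm[simp]: "pure (rename_fm f \<phi>) = pure \<phi>"
  by (induction \<phi>) auto

lemma fv_rename_fm: "inj f \<Longrightarrow> fv (rename_fm f \<phi>) = f ` fv \<phi>"
  by (induction \<phi>) (auto simp: tvars_rename_tm image_set_diff image_Un)

definition rename0 :: "nat \<Rightarrow> pfm \<Rightarrow> pfm" where
  "rename0 v \<phi> = rename_fm (id(0 := v, v := 0)) \<phi>"

lemma sat_rename0:
  assumes "v \<notin> fv \<phi>"
  shows "sat S P e (rename0 v \<phi>) = sat S P (e(0 := e v)) \<phi>"
proof -
  have "inj (id(0 := v, v := 0))"
    by (auto simp: inj_def)
  then have "sat S P e (rename0 v \<phi>) = sat S P (e \<circ> id(0 := v, v := 0)) \<phi>"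
    by (simp add: rename0_def sat_rename_fm)
  also have "\<dots> = sat S P (e(0 := e v)) \<phi>"
    by (rule sat_cong) (use assms in auto)
  finally show ?thesis .
qed

lemma pure_rename0[simp]: "pure (rename0 v \<phi>) = pure \<phi>"
  by (simp add: rename0_def)

definition PTrue :: pfm where "PTrue = PEq PZero PZero"
definition POr :: "pfm \<Rightarrow> pfm \<Rightarrow> pfm" where "POr \<phi> \<psi> = PNot (PAnd (PNot \<phi>) (PNot \<psi>))"
definition PImp :: "pfm \<Rightarrow> pfm \<Rightarrow> pfm" where "PImp \<phi> \<psi> = PNot (PAnd \<phi> (PNot \<psi>))"
definition PIff :: "pfm \<Rightarrow> pfm \<Rightarrow> pfm" where "PIff \<phi> \<psi> = PAnd (PImp \<phi> \<psi>) (PImp \<psi> \<phi>)"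
definition PAll :: "nat \<Rightarrow> pfm \<Rightarrow> pfm" where "PAll i \<phi> = PNot (PEx i (PNot \<phi>))"

lemma sat_derived_connectives[simp]:
  "sat S P e PTrue"
  "sat S P e (POr \<phi> \<psi>) \<longleftrightarrow> sat S P e \<phi> \<or> sat S P e \<psi>"
  "sat S P e (PImp \<phi> \<psi>) \<longleftrightarrow> (sat S P e \<phi> \<longrightarrow> sat S P e \<psi>)"
  "sat S P e (PIff \<phi> \<psi>) \<longleftrightarrow> (sat S P e \<phi> \<longleftrightarrow> sat S P e \<psi>)"
  "sat S P e (PAll i \<phi>) \<longleftrightarrow> (\<forall>x\<in>pdom S. sat S P (e(i := x)) \<phi>)"
  by (auto simp: PTrue_def POr_def PImp_def PIff_def PAll_def)

lemma pure_derived_connectives[simp]: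
  "pure PTrue" "pure (POr \<phi> \<psi>) = (pure \<phi> \<and> pure \<psi>)" "pure (PImp \<phi> \<psi>) = (pure \<phi> \<and> pure \<psi>)"
  "pure (PIff \<phi> \<psi>) = (pure \<phi> \<and> pure \<psi>)" "pure (PAll i \<phi>) = pure \<phi>"
  by (auto simp: PTrue_def POr_def PImp_def PIff_def PAll_def)

lemma fv_derived_connectives[simp]:
  "fv PTrue = {}" "fv (POr \<phi> \<psi>) = fv \<phi> \<union> fv \<psi>" "fv (PImp \<phi> \<psi>) = fv \<phi> \<union> fv \<psi>"
  "fv (PIff \<phi> \<psi>) = fv \<phi> \<union> fv \<psi>" "fv (PAll i \<phi>) = fv \<phi> - {i}"
  by (auto simp: PTrue_def POr_def PImp_def PIff_def PAll_def)

fun nsmul :: "'a pstruct \<Rightarrow> nat \<Rightarrow> 'a \<Rightarrow> 'a" where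
  "nsmul S 0 a = pzero S"
| "nsmul S (Suc k) a = padd S a (nsmul S k a)"

fun tm_nsmul :: "nat \<Rightarrow> ptm \<Rightarrow> ptm" where
  "tm_nsmul 0 t = PZero"
| "tm_nsmul (Suc k) t = PAdd t (tm_nsmul k t)"

definition tm_zsmul :: "int \<Rightarrow> ptm \<Rightarrow> ptm" where
  "tm_zsmul c t = (if 0 \<le> c then tm_nsmul (nat c) t else PNeg (tm_nsmul (nat (- c)) t))"

lemma teval_tm_nsmul[simp]: "teval S e (tm_nsmul k t) = nsmul S k (teval S e t)"
  by (induction k) auto

lemma tvars_tm_nsmul: "tvars (tm_nsmul k t) \<subseteq> tvars t"
  by (induction k) auto

lemma tvars_tm_zsmul: "tvars (tm_zsmul c t) \<subseteq> tvars t"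
  using tvars_tm_nsmul by (auto simp: tm_zsmul_def)

fun max_tvar :: "ptm \<Rightarrow> nat" where
  "max_tvar (PVar i) = i"
| "max_tvar PZero = 0"
| "max_tvar POne = 0"
| "max_tvar (PAdd s t) = max (max_tvar s) (max_tvar t)"
| "max_tvar (PNeg t) = max_tvar t"

lemma le_max_tvar: "i \<in> tvars t \<Longrightarrow> i \<le> max_tvar t"
  by (induction t) auto

definition PDvd :: "nat \<Rightarrow> ptm \<Rightarrow> pfm" where
  "PDvd k u = PEx (Suc (max_tvar u)) (PEq (tm_nsmul k (PVar (Suc (max_tvar u)))) u)"

lemma sat_PDvd: "sat S P e (PDvd k u) \<longleftrightarrow> (\<exists>y\<in>pdom S. nsmul S k y = teval S e u)"
proof -
  have "teval S (e(Suc (max_tvar u) := y)) u = teval S e u" for y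
    by (rule teval_cong) (auto dest: le_max_tvar)
  then show ?thesis by (simp add: PDvd_def)
qed

lemma pure_PDvd[simp]: "pure (PDvd k u)"
  by (simp add: PDvd_def)

lemma fv_PDvd: "fv (PDvd k u) \<subseteq> tvars u"
  using tvars_tm_nsmul[of k "PVar (Suc (max_tvar u))"] by (auto simp: PDvd_def)

section \<open>Quantifier elimination in Z\<close>

lemma Zstruct_simps[simp]:
  "pdom Zstruct = UNIV" "padd Zstruct = (+)" "pneg Zstruct = uminus"
  "pzero Zstruct = 0" "pone Zstruct = 1" "pless Zstruct = (<)"
  by (auto simp: Zstruct_def)

lemma nsmul_Zstruct[simp]: "nsmul Zstruct k a = int k * a"
  by (induction k) (auto simp: algebra_simps)

lemma teval_tm_zsmul_Zstruct[simp]: "teval Zstruct e (tm_zsmul c t) = c * teval Zstruct e t"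
  by (auto simp: tm_zsmul_def)

(* The parameter r maps each variable to its current de Bruijn index. *)
fun num_of_ptm :: "(nat \<Rightarrow> nat) \<Rightarrow> ptm \<Rightarrow> Cooper.num" where
  "num_of_ptm r (PVar i) = Bound (r i)"
| "num_of_ptm r PZero = Cooper.C 0"
| "num_of_ptm r POne = Cooper.C 1"
| "num_of_ptm r (PAdd s t) = Cooper.Add (num_of_ptm r s) (num_of_ptm r t)"
| "num_of_ptm r (PNeg t) = Cooper.Neg (num_of_ptm r t)"

fun fm_of_pfm :: "(nat \<Rightarrow> nat) \<Rightarrow> pfm \<Rightarrow> Cooper.fm" where
  "fm_of_pfm r (PEq s t) = Cooper.Eq (Cooper.Sub (num_of_ptm r s) (num_of_ptm r t))"
| "fm_of_pfm r (PLess s t) = Cooper.Lt (Cooper.Sub (num_of_ptm r s) (num_of_ptm r t))"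
| "fm_of_pfm r (PP t) = Cooper.F"
| "fm_of_pfm r (PNot \<phi>) = Cooper.Not (fm_of_pfm r \<phi>)"
| "fm_of_pfm r (PAnd \<phi> \<psi>) = Cooper.And (fm_of_pfm r \<phi>) (fm_of_pfm r \<psi>)"
| "fm_of_pfm r (PEx i \<phi>) = Cooper.E (fm_of_pfm ((Suc \<circ> r)(i := 0)) \<phi>)"

lemma Inum_num_of_ptm: "Inum bs (num_of_ptm r t) = teval Zstruct (\<lambda>i. bs ! r i) t"
  by (induction t) auto

lemma Ifm_fm_of_pfm: "pure \<phi> \<Longrightarrow> Ifm bbs bs (fm_of_pfm r \<phi>) = sat Zstruct {} (\<lambda>i. bs ! r i) \<phi>"
proof (induction \<phi> arbitrary: r bs)
  case (PEx i \<phi>)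
  have "(\<lambda>j. (x # bs) ! ((Suc \<circ> r)(i := 0)) j) = (\<lambda>j. bs ! r j)(i := x)" for x
    by (auto simp: fun_eq_iff)
  then show ?case using PEx by simp
qed (auto simp: Inum_num_of_ptm)

(* A Cooper term, read in the variables 0, ..., n - 1 and the parameters n, n + 1, ...,
   is split into an L-term in the variables (constants included) and one in the parameters. *)
fun var_part :: "nat \<Rightarrow> Cooper.num \<Rightarrow> ptm" where
  "var_part n (Cooper.C c) = tm_zsmul c POne"
| "var_part n (Bound j) = (if j < n then PVar j else PZero)"
| "var_part n (CN j c a) = PAdd (tm_zsmul c (if j < n then PVar j else PZero)) (var_part n a)"
| "var_part n (Cooper.Neg a) = PNeg (var_part n a)"
| "var_part n (Cooper.Add a b) = PAdd (var_part n a) (var_part n b)"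
| "var_part n (Cooper.Sub a b) = PAdd (var_part n a) (PNeg (var_part n b))"
| "var_part n (Cooper.Mul c a) = tm_zsmul c (var_part n a)"

fun param_part :: "nat \<Rightarrow> Cooper.num \<Rightarrow> ptm" where
  "param_part n (Cooper.C c) = PZero"
| "param_part n (Bound j) = (if j < n then PZero else PVar j)"
| "param_part n (CN j c a) = PAdd (tm_zsmul c (if j < n then PZero else PVar j)) (param_part n a)"
| "param_part n (Cooper.Neg a) = PNeg (param_part n a)"
| "param_part n (Cooper.Add a b) = PAdd (param_part n a) (param_part n b)"
| "param_part n (Cooper.Sub a b) = PAdd (param_part n a) (PNeg (param_part n b))"
| "param_part n (Cooper.Mul c a) = tm_zsmul c (param_part n a)"

definition split_tm :: "nat \<Rightarrow> Cooper.num \<Rightarrow> ptm" where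
  "split_tm n t = PAdd (var_part n t) (param_part n t)"

lemma tvars_var_part: "tvars (var_part n t) \<subseteq> {..<n}"
  by (induction t) (use tvars_tm_zsmul in \<open>fastforce split: if_splits\<close>)+

lemma tvars_param_part: "tvars (param_part n t) \<subseteq> {n..}"
  by (induction t) (use tvars_tm_zsmul in \<open>fastforce split: if_splits\<close>)+

lemma Zstruct_split_tm: "teval Zstruct (\<lambda>j. bs ! j) (split_tm n t) = Inum bs t"
proof (induction t)
  case (Mul c a)
  then show ?case by (simp add: split_tm_def flip: distrib_left)
qed (auto simp: split_tm_def algebra_simps)

(* Only quantifier-free input matters, so the quantifier cases are junk. Cooper's Closed
   atoms refer to a list of Boolean parameters; they are read in the empty list, as in
   Ifm [] below. *)
fun pfm_of_qf :: "nat \<Rightarrow> Cooper.fm \<Rightarrow> pfm" where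
  "pfm_of_qf n Cooper.T = PTrue"
| "pfm_of_qf n Cooper.F = PNot PTrue"
| "pfm_of_qf n (Lt t) = PLess (split_tm n t) PZero"
| "pfm_of_qf n (Gt t) = PLess (split_tm n (Cooper.Neg t)) PZero"
| "pfm_of_qf n (Le t) = PNot (PLess (split_tm n (Cooper.Neg t)) PZero)"
| "pfm_of_qf n (Ge t) = PNot (PLess (split_tm n t) PZero)"
| "pfm_of_qf n (Eq t) = PEq (split_tm n t) PZero"
| "pfm_of_qf n (NEq t) = PNot (PEq (split_tm n t) PZero)"
| "pfm_of_qf n (Dvd i t) = PDvd (nat \<bar>i\<bar>) (split_tm n t)"
| "pfm_of_qf n (NDvd i t) = PNot (PDvd (nat \<bar>i\<bar>) (split_tm n t))"
| "pfm_of_qf n (Not p) = PNot (pfm_of_qf n p)"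
| "pfm_of_qf n (And p q) = PAnd (pfm_of_qf n p) (pfm_of_qf n q)"
| "pfm_of_qf n (Or p q) = POr (pfm_of_qf n p) (pfm_of_qf n q)"
| "pfm_of_qf n (Imp p q) = PImp (pfm_of_qf n p) (pfm_of_qf n q)"
| "pfm_of_qf n (Iff p q) = PIff (pfm_of_qf n p) (pfm_of_qf n q)"
| "pfm_of_qf n (Cooper.E p) = PTrue"
| "pfm_of_qf n (Cooper.A p) = PTrue"
| "pfm_of_qf n (Closed k) = (if ([] :: bool list) ! k then PTrue else PNot PTrue)"
| "pfm_of_qf n (NClosed k) = (if ([] :: bool list) ! k then PNot PTrue else PTrue)"

lemma pure_pfm_of_qf[simp]: "pure (pfm_of_qf n p)"
  by (induction p) auto

lemma int_dvd_iff_ex_mult: "(i :: int) dvd v \<longleftrightarrow> (\<exists>y. int (nat \<bar>i\<bar>) * y = v)"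
  by (metis abs_dvd_iff dvd_def int_nat_eq abs_ge_zero)

lemma Zstruct_pfm_of_qf: "qfree p \<Longrightarrow> sat Zstruct {} (\<lambda>j. bs ! j) (pfm_of_qf n p) = Ifm [] bs p"
  by (induction p) (auto simp: Zstruct_split_tm sat_PDvd int_dvd_iff_ex_mult)

lemma Zstruct_qe:
  assumes "pure \<phi>"
  obtains \<psi> where "qfree \<psi>" "\<And>e. sat Zstruct {} e (pfm_of_qf n \<psi>) = sat Zstruct {} e \<phi>"
proof
  let ?\<psi> = "pa (fm_of_pfm id \<phi>)"
  show "qfree ?\<psi>"
    using mirqe by blast
  fix e :: "nat \<Rightarrow> int"
  obtain L where L: "\<forall>j \<in> fv \<phi> \<union> fv (pfm_of_qf n ?\<psi>). j < L"
    using finite_nat_set_iff_bounded finite_fv finite_Un by metis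
  define bs where "bs = map e [0..<L]"
  have "sat Zstruct {} e (pfm_of_qf n ?\<psi>) = sat Zstruct {} (\<lambda>j. bs ! j) (pfm_of_qf n ?\<psi>)"
    by (rule sat_cong) (use L in \<open>auto simp: bs_def\<close>)
  also have "\<dots> = Ifm [] bs ?\<psi>"
    using Zstruct_pfm_of_qf mirqe by blast
  also have "\<dots> = sat Zstruct {} (\<lambda>j. bs ! j) \<phi>"
    using Ifm_fm_of_pfm[OF assms] mirqe by simp
  also have "\<dots> = sat Zstruct {} e \<phi>"
    by (rule sat_cong) (use L in \<open>auto simp: bs_def\<close>)
  finally show "sat Zstruct {} e (pfm_of_qf n ?\<psi>) = sat Zstruct {} e \<phi>" .
qed

section \<open>Models of Presburger arithmetic\<close>

lemma sat_foldr_PAll_imp: "range e \<subseteq> pdom S \<Longrightarrow> sat S P e (foldr PAll vs \<phi>) \<Longrightarrow> sat S P e \<phi>"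
proof (induction vs)
  case (Cons v vs)
  have "e v \<in> pdom S"
    using Cons.prems(1) by auto
  moreover have "\<forall>x\<in>pdom S. sat S P (e(v := x)) (foldr PAll vs \<phi>)"
    using Cons.prems(2) by simp
  ultimately have "sat S P (e(v := e v)) (foldr PAll vs \<phi>)"
    by blast
  then show ?case
    using Cons by simp
qed simp

lemma Zstruct_sat_foldr_PAll: "(\<And>e. sat Zstruct P e \<phi>) \<Longrightarrow> sat Zstruct P e (foldr PAll vs \<phi>)"
  by (induction vs arbitrary: e) auto

lemma fv_foldr_PAll: "fv (foldr PAll vs \<phi>) = fv \<phi> - set vs"
  by (induction vs) auto

lemma pure_foldr_PAll: "pure (foldr PAll vs \<phi>) = pure \<phi>"
  by (induction vs) auto

locale pa_model =
  fixes S :: "'a pstruct"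
  assumes model: "presburger_model S"
begin

lemma pzero_in[simp]: "pzero S \<in> pdom S"
  and pone_in[simp]: "pone S \<in> pdom S"
  and padd_in[simp]: "a \<in> pdom S \<Longrightarrow> b \<in> pdom S \<Longrightarrow> padd S a b \<in> pdom S"
  and pneg_in[simp]: "a \<in> pdom S \<Longrightarrow> pneg S a \<in> pdom S"
  using model by (auto simp: presburger_model_def is_pstruct_def)

lemma teval_in: "range e \<subseteq> pdom S \<Longrightarrow> teval S e t \<in> pdom S"
  by (induction t) auto

lemma nsmul_in: "a \<in> pdom S \<Longrightarrow> nsmul S k a \<in> pdom S"
  by (induction k) auto

(* The universal closure of a Z-valid formula is a sentence of Th(Z). *)
lemma sat_if_Zstruct_valid:
  assumes "pure \<phi>" "\<And>e. sat Zstruct {} e \<phi>" "range e \<subseteq> pdom S"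
  shows "sat S {} e \<phi>"
proof -
  obtain vs where vs: "set vs = fv \<phi>"
    using finite_list[OF finite_fv] by metis
  have "sat Zstruct {} (\<lambda>_. 0) (foldr PAll vs \<phi>)"
    using Zstruct_sat_foldr_PAll assms(2) by blast
  moreover have "pure (foldr PAll vs \<phi>)" "fv (foldr PAll vs \<phi>) = {}"
    using assms(1) vs by (simp_all add: pure_foldr_PAll fv_foldr_PAll)
  ultimately have "sat S {} e (foldr PAll vs \<phi>)"
    using model assms(3) unfolding presburger_model_def by blast
  then show ?thesis
    using sat_foldr_PAll_imp assms(3) by blast
qed

lemma qe:
  assumes "pure \<phi>"
  obtains \<psi> where "qfree \<psi>" "\<And>e. range e \<subseteq> pdom S \<Longrightarrow> sat S {} e (pfm_of_qf n \<psi>) = sat S {} e \<phi>"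
proof -
  obtain \<psi> where "qfree \<psi>" and equiv: "\<And>e. sat Zstruct {} e (pfm_of_qf n \<psi>) = sat Zstruct {} e \<phi>"
    using Zstruct_qe[OF assms] by blast
  moreover have "sat S {} e (PIff (pfm_of_qf n \<psi>) \<phi>)" if "range e \<subseteq> pdom S" for e
    by (rule sat_if_Zstruct_valid) (use assms equiv that in auto)
  ultimately show thesis
    using that by simp
qed

lemma sat_list_env_if_Zstruct_valid:
  assumes "pure \<phi>" "\<And>e. sat Zstruct {} e \<phi>" "set xs \<subseteq> pdom S"
  shows "sat S {} (list_env (pzero S) xs) \<phi>"
  using sat_if_Zstruct_valid[OF assms(1,2)] range_list_env[OF assms(3) pzero_in] by blast

lemma padd_pless_zero_iff:
  assumes "a \<in> pdom S" "b \<in> pdom S"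
  shows "pless S (padd S a b) (pzero S) \<longleftrightarrow> pless S a (pneg S b)"
proof -
  have "sat S {} (list_env (pzero S) [a, b])
      (PIff (PLess (PAdd (PVar 0) (PVar 1)) PZero) (PLess (PVar 0) (PNeg (PVar 1))))"
    by (rule sat_list_env_if_Zstruct_valid) (auto simp: assms)
  then show ?thesis by (simp add: list_env_def)
qed

lemma pneg_pneg:
  assumes "a \<in> pdom S"
  shows "pneg S (pneg S a) = a"
proof -
  have "sat S {} (list_env (pzero S) [a]) (PEq (PNeg (PNeg (PVar 0))) (PVar 0))"
    by (rule sat_list_env_if_Zstruct_valid) (auto simp: assms)
  then show ?thesis by (simp add: list_env_def)
qed

lemma padd_eq_pzero_imp:
  assumes "a \<in> pdom S" "b \<in> pdom S" "padd S a b = pzero S"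
  shows "b = pneg S a"
proof -
  have "sat S {} (list_env (pzero S) [a, b])
      (PImp (PEq (PAdd (PVar 0) (PVar 1)) PZero) (PEq (PVar 1) (PNeg (PVar 0))))"
    by (rule sat_list_env_if_Zstruct_valid) (auto simp: assms)
  then show ?thesis using assms(3) by (simp add: list_env_def)
qed

lemma pless_asym:
  assumes "a \<in> pdom S" "b \<in> pdom S" "pless S a b"
  shows "\<not> pless S b a"
proof -
  have "sat S {} (list_env (pzero S) [a, b])
      (PNot (PAnd (PLess (PVar 0) (PVar 1)) (PLess (PVar 1) (PVar 0))))"
    by (rule sat_list_env_if_Zstruct_valid) (auto simp: assms)
  then show ?thesis using assms(3) by (simp add: list_env_def)
qed

lemma pless_linear:
  assumes "a \<in> pdom S" "b \<in> pdom S"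
  shows "pless S a b \<or> a = b \<or> pless S b a"
proof -
  have "sat S {} (list_env (pzero S) [a, b])
      (POr (PLess (PVar 0) (PVar 1)) (POr (PEq (PVar 0) (PVar 1)) (PLess (PVar 1) (PVar 0))))"
    by (rule sat_list_env_if_Zstruct_valid) (auto simp: assms)
  then show ?thesis by (simp add: list_env_def)
qed

lemma pless_trans:
  assumes "a \<in> pdom S" "b \<in> pdom S" "c \<in> pdom S" "pless S a b" "pless S b c"
  shows "pless S a c"
proof -
  have "sat S {} (list_env (pzero S) [a, b, c])
      (PImp (PAnd (PLess (PVar 0) (PVar 1)) (PLess (PVar 1) (PVar 2))) (PLess (PVar 0) (PVar 2)))"
    by (rule sat_list_env_if_Zstruct_valid) (auto simp: assms)
  then show ?thesis using assms(4,5) by (simp add: list_env_def)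
qed

lemma pless_imp_succ_le:
  assumes "a \<in> pdom S" "b \<in> pdom S" "pless S a b"
  shows "pless S (padd S a (pone S)) b \<or> padd S a (pone S) = b"
proof -
  have "sat S {} (list_env (pzero S) [a, b]) (PImp (PLess (PVar 0) (PVar 1))
      (POr (PLess (PAdd (PVar 0) POne) (PVar 1)) (PEq (PAdd (PVar 0) POne) (PVar 1))))"
    by (rule sat_list_env_if_Zstruct_valid) (auto simp: assms)
  then show ?thesis using assms(3) by (simp add: list_env_def)
qed

lemma int_residue:
  assumes "0 < k"
  shows "\<exists>r. \<not> r < 0 \<and> r < int k \<and> (\<forall>s. (\<exists>y. int k * y = s + b) \<longleftrightarrow> (\<exists>y. int k * y = s + r))"
proof (intro exI conjI)
  have k: "0 < int k"
    using assms by simp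
  show "\<not> b mod int k < 0"
    using pos_mod_sign[OF k, of b] by linarith
  show "b mod int k < int k"
    using pos_mod_bound[OF k, of b] .
  show "\<forall>s. (\<exists>y. int k * y = s + b) \<longleftrightarrow> (\<exists>y. int k * y = s + b mod int k)"
    by (metis dvd_def dvd_eq_mod_eq_0 mod_add_right_eq)
qed

lemma residue_exists:
  assumes "0 < k" "b \<in> pdom S"
  shows "\<exists>r\<in>pdom S. \<not> pless S r (pzero S) \<and> pless S r (nsmul S k (pone S)) \<and>
    (\<forall>s\<in>pdom S. (\<exists>y\<in>pdom S. nsmul S k y = padd S s b) \<longleftrightarrow> (\<exists>y\<in>pdom S. nsmul S k y = padd S s r))"
proof -
  have "sat S {} (list_env (pzero S) [b]) (PEx 1 (PAnd (PNot (PLess (PVar 1) PZero))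
      (PAnd (PLess (PVar 1) (tm_nsmul k POne))
        (PAll 2 (PIff (PDvd k (PAdd (PVar 2) (PVar 0))) (PDvd k (PAdd (PVar 2) (PVar 1))))))))"
    by (rule sat_list_env_if_Zstruct_valid) (use int_residue[OF assms(1)] assms(2) in \<open>auto simp: sat_PDvd\<close>)
  then show ?thesis by (simp add: list_env_def sat_PDvd)
qed

end

lemma definable_Diff:
  assumes "definable S A n X"
  shows "definable S A n ({xs. length xs = n \<and> set xs \<subseteq> pdom S} - X)"
proof -
  obtain \<phi> ps where \<phi>: "pure \<phi>" "set ps \<subseteq> A" "fv \<phi> \<subseteq> {..<n + length ps}"
    "X = {xs. length xs = n \<and> set xs \<subseteq> pdom S \<and> sat S {} (\<lambda>i. (xs @ ps) ! i) \<phi>}"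
    using assms unfolding definable_def by blast
  have "{xs. length xs = n \<and> set xs \<subseteq> pdom S} - X =
      {xs. length xs = n \<and> set xs \<subseteq> pdom S \<and> sat S {} (\<lambda>i. (xs @ ps) ! i) (PNot \<phi>)}"
    unfolding \<phi>(4) by auto
  then show ?thesis
    unfolding definable_def using \<phi>(1-3) by (intro exI[of _ "PNot \<phi>"] exI[of _ ps]) simp
qed

(* The parameters of the second formula are shifted behind those of the first. *)
lemma definable_Int:
  assumes "definable S A n X" "definable S A n Y"
  shows "definable S A n (X \<inter> Y)"
proof -
  obtain \<phi> ps where \<phi>: "pure \<phi>" "set ps \<subseteq> A" "fv \<phi> \<subseteq> {..<n + length ps}"
    "X = {xs. length xs = n \<and> set xs \<subseteq> pdom S \<and> sat S {} (\<lambda>i. (xs @ ps) ! i) \<phi>}"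
    using assms(1) unfolding definable_def by blast
  obtain \<psi> qs where \<psi>: "pure \<psi>" "set qs \<subseteq> A" "fv \<psi> \<subseteq> {..<n + length qs}"
    "Y = {xs. length xs = n \<and> set xs \<subseteq> pdom S \<and> sat S {} (\<lambda>i. (xs @ qs) ! i) \<psi>}"
    using assms(2) unfolding definable_def by blast
  define f where "f j = (if j < n then j else j + length ps)" for j
  have inj: "inj f"
    by (auto simp: inj_def f_def split: if_splits)
  have fv: "fv (PAnd \<phi> (rename_fm f \<psi>)) \<subseteq> {..<n + length (ps @ qs)}"
    using \<phi>(3) \<psi>(3) by (auto simp: fv_rename_fm[OF inj] f_def)
  have "sat S {} (\<lambda>i. (xs @ ps @ qs) ! i) \<phi> = sat S {} (\<lambda>i. (xs @ ps) ! i) \<phi>"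
    if "length xs = n" for xs
    by (rule sat_cong) (use \<phi>(3) that in \<open>auto simp: nth_append\<close>)
  moreover have "sat S {} (\<lambda>i. (xs @ ps @ qs) ! i) (rename_fm f \<psi>) = sat S {} (\<lambda>i. (xs @ qs) ! i) \<psi>"
    if "length xs = n" for xs
    unfolding sat_rename_fm[OF inj]
    by (rule sat_cong) (use \<psi>(3) that in \<open>auto simp: f_def nth_append\<close>)
  ultimately have "X \<inter> Y = {xs. length xs = n \<and> set xs \<subseteq> pdom S \<and>
      sat S {} (\<lambda>i. (xs @ (ps @ qs)) ! i) (PAnd \<phi> (rename_fm f \<psi>))}"
    unfolding \<phi>(4) \<psi>(4) by auto
  then show ?thesis
    unfolding definable_def using \<phi>(1,2) \<psi>(1,2) fv
    by (intro exI[of _ "PAnd \<phi> (rename_fm f \<psi>)"] exI[of _ "ps @ qs"]) simp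
qed

lemma restr_simps[simp]:
  "pdom (restr S A) = A" "padd (restr S A) = padd S" "pneg (restr S A) = pneg S"
  "pzero (restr S A) = pzero S" "pone (restr S A) = pone S" "pless (restr S A) = pless S"
  by (auto simp: restr_def)

lemma teval_restr[simp]: "teval (restr S A) e t = teval S e t"
  by (induction t) auto

lemma nsmul_restr[simp]: "nsmul (restr S A) k a = nsmul S k a"
  by (induction k) auto

definition trace :: "'a set \<Rightarrow> 'a pstruct \<Rightarrow> nat \<Rightarrow> 'a list \<Rightarrow> pfm \<Rightarrow> 'a list set" where
  "trace M N n ps \<phi> = {xs. length xs = n \<and> set xs \<subseteq> M \<and> sat N {} (list_env (pzero N) (xs @ ps)) \<phi>}"

lemma trace_PNot:
  "trace M N n ps (PNot \<phi>) = {xs. length xs = n \<and> set xs \<subseteq> M} - trace M N n ps \<phi>"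
  by (auto simp: trace_def)

lemma trace_PAnd: "trace M N n ps (PAnd \<phi> \<psi>) = trace M N n ps \<phi> \<inter> trace M N n ps \<psi>"
  by (auto simp: trace_def)

definition shift_reducible :: "'a set \<Rightarrow> 'a pstruct \<Rightarrow> ('a \<Rightarrow> bool) \<Rightarrow> 'a \<Rightarrow> bool" where
  "shift_reducible M N R b \<longleftrightarrow>
     (\<exists>a\<in>M. \<forall>s\<in>M. R (padd N s b) = R (padd N s a)) \<or> (\<exists>c. \<forall>s\<in>M. R (padd N s b) = c)"

lemma teval_list_env_append_low:
  "tvars u \<subseteq> {..<length xs} \<Longrightarrow> teval S (list_env z (xs @ ys)) u = teval S (list_env z xs) u"
  by (rule teval_cong) (auto simp: list_env_def nth_append)

lemma teval_list_env_append_high: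
  "tvars u \<subseteq> {length xs..} \<Longrightarrow>
    teval S (list_env z (xs @ ys)) u = teval S (\<lambda>j. list_env z ys (j - length xs)) u"
  by (rule teval_cong) (auto simp: list_env_def nth_append)

lemma trace_split_atom:
  assumes "\<And>e u. sat N {} e (G u) = R (teval N e u)"
  shows "trace M N n ps (G (split_tm n t)) = {xs. length xs = n \<and> set xs \<subseteq> M \<and>
    R (padd N (teval N (list_env (pzero N) xs) (var_part n t))
              (teval N (\<lambda>j. list_env (pzero N) ps (j - n)) (param_part n t)))}"
proof -
  have "sat N {} (list_env (pzero N) (xs @ ps)) (G (split_tm n t)) \<longleftrightarrow>
      R (padd N (teval N (list_env (pzero N) xs) (var_part n t))
                (teval N (\<lambda>j. list_env (pzero N) ps (j - n)) (param_part n t)))"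
    if "length xs = n" for xs
    using that tvars_var_part[of n t] tvars_param_part[of n t]
    by (simp add: assms split_tm_def teval_list_env_append_low teval_list_env_append_high)
  then show ?thesis
    unfolding trace_def by (intro Collect_cong) blast
qed

lemma shift_reducible_mem: "b \<in> M \<Longrightarrow> shift_reducible M N R b"
  unfolding shift_reducible_def by blast

locale elementary_pair =
  fixes M :: "'a set" and N :: "'a pstruct"
  assumes pair: "presburger_pair M N"
begin

sublocale N: pa_model N
  using pair by (simp add: presburger_pair_def pa_model_def)

sublocale M: pa_model "restr N M"
  using pair by (simp add: presburger_pair_def pa_model_def)

lemma M_subset: "M \<subseteq> pdom N"
  using pair by (simp add: presburger_pair_def elem_sub_def)

lemma sat_restr_iff: "pure \<phi> \<Longrightarrow> range e \<subseteq> M \<Longrightarrow> sat (restr N M) {} e \<phi> = sat N {} e \<phi>"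
  using pair by (simp add: presburger_pair_def elem_sub_def)

lemma closed_M[simp]:
  "pzero N \<in> M" "pone N \<in> M" "a \<in> M \<Longrightarrow> b \<in> M \<Longrightarrow> padd N a b \<in> M" "a \<in> M \<Longrightarrow> pneg N a \<in> M"
  using M.pzero_in M.pone_in M.padd_in M.pneg_in by simp_all

lemma mem_pdom_if_M[simp]: "a \<in> M \<Longrightarrow> a \<in> pdom N"
  using M_subset by blast

lemma definable_trace:
  assumes "set qs \<subseteq> M" "pure \<chi>" "fv \<chi> \<subseteq> {..<n + length qs}"
  shows "definable (restr N M) M n (trace M N n qs \<chi>)"
proof -
  have "sat (restr N M) {} (\<lambda>i. (xs @ qs) ! i) \<chi> = sat N {} (list_env (pzero N) (xs @ qs)) \<chi>"
    if "length xs = n" "set xs \<subseteq> M" for xs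
  proof -
    have "range (list_env (pzero N) (xs @ qs)) \<subseteq> M"
      using that assms(1) by (intro range_list_env) auto
    have "sat (restr N M) {} (\<lambda>i. (xs @ qs) ! i) \<chi> = sat (restr N M) {} (list_env (pzero N) (xs @ qs)) \<chi>"
      using sat_list_env[of \<chi> "xs @ qs"] assms(3) that(1) by simp
    also have "\<dots> = sat N {} (list_env (pzero N) (xs @ qs)) \<chi>"
      using sat_restr_iff[OF assms(2)] \<open>range (list_env (pzero N) (xs @ qs)) \<subseteq> M\<close> by blast
    finally show ?thesis .
  qed
  then have "trace M N n qs \<chi> = {xs. length xs = n \<and> set xs \<subseteq> pdom (restr N M) \<and>
      sat (restr N M) {} (\<lambda>i. (xs @ qs) ! i) \<chi>}"
    by (auto simp: trace_def)
  then show ?thesis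
    unfolding definable_def using assms by blast
qed

lemma definable_const: "definable (restr N M) M n {xs. length xs = n \<and> set xs \<subseteq> M \<and> c}"
proof -
  have "{xs. length xs = n \<and> set xs \<subseteq> M \<and> c} = trace M N n [] (if c then PTrue else PNot PTrue)"
    by (auto simp: trace_def)
  then show ?thesis
    using definable_trace[of "[]" "if c then PTrue else PNot PTrue" n] by simp
qed

lemma definable_trace_PNot:
  "definable (restr N M) M n (trace M N n ps \<phi>) \<Longrightarrow> definable (restr N M) M n (trace M N n ps (PNot \<phi>))"
  using definable_Diff by (fastforce simp: trace_PNot)

lemma definable_trace_PAnd:
  "definable (restr N M) M n (trace M N n ps \<phi>) \<Longrightarrow> definable (restr N M) M n (trace M N n ps \<psi>) \<Longrightarrow>
    definable (restr N M) M n (trace M N n ps (PAnd \<phi> \<psi>))"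
  using definable_Int by (simp add: trace_PAnd)

lemma var_part_in_M: "set xs \<subseteq> M \<Longrightarrow> teval N (list_env (pzero N) xs) (var_part n t) \<in> M"
  using M.teval_in[of "list_env (pzero N) xs"] range_list_env[of xs M "pzero N"] by simp

lemma definable_shifted_atom:
  assumes G: "\<And>e u. sat N {} e (G u) = R (teval N e u)" "\<And>u. pure (G u)" "\<And>u. fv (G u) \<subseteq> tvars u"
    and "a \<in> M"
  shows "definable (restr N M) M n
    {xs. length xs = n \<and> set xs \<subseteq> M \<and> R (padd N (teval N (list_env (pzero N) xs) (var_part n t)) a)}"
proof -
  have "sat N {} (list_env (pzero N) (xs @ [a])) (G (PAdd (var_part n t) (PVar n))) \<longleftrightarrow>
      R (padd N (teval N (list_env (pzero N) xs) (var_part n t)) a)" if "length xs = n" for xs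
    using that tvars_var_part[of n t]
    by (simp add: G(1) teval_list_env_append_low list_env_def nth_append)
  then have "trace M N n [a] (G (PAdd (var_part n t) (PVar n))) =
      {xs. length xs = n \<and> set xs \<subseteq> M \<and> R (padd N (teval N (list_env (pzero N) xs) (var_part n t)) a)}"
    unfolding trace_def by (intro Collect_cong) blast
  moreover have "definable (restr N M) M n (trace M N n [a] (G (PAdd (var_part n t) (PVar n))))"
    using assms(4) G(2,3)[of "PAdd (var_part n t) (PVar n)"] tvars_var_part[of n t]
    by (intro definable_trace) auto
  ultimately show ?thesis
    by simp
qed

lemma definable_trace_atom:
  assumes G: "\<And>e u. sat N {} e (G u) = R (teval N e u)" "\<And>u. pure (G u)" "\<And>u. fv (G u) \<subseteq> tvars u"
    and "shift_reducible M N R (teval N (\<lambda>j. list_env (pzero N) ps (j - n)) (param_part n t))"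
  shows "definable (restr N M) M n (trace M N n ps (G (split_tm n t)))"
proof -
  define b where "b = teval N (\<lambda>j. list_env (pzero N) ps (j - n)) (param_part n t)"
  define s where "s xs = teval N (list_env (pzero N) xs) (var_part n t)" for xs
  have trace_eq: "trace M N n ps (G (split_tm n t)) =
      {xs. length xs = n \<and> set xs \<subseteq> M \<and> R (padd N (s xs) b)}"
    unfolding b_def s_def by (rule trace_split_atom) (rule G(1))
  from assms(4) consider (shift) a where "a \<in> M" "\<forall>s\<in>M. R (padd N s b) = R (padd N s a)"
    | (const) c where "\<forall>s\<in>M. R (padd N s b) = c"
    unfolding shift_reducible_def b_def by blast
  then show ?thesis
  proof cases
    case shift
    then have "trace M N n ps (G (split_tm n t)) =
        {xs. length xs = n \<and> set xs \<subseteq> M \<and> R (padd N (s xs) a)}"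
      using var_part_in_M by (auto simp: trace_eq s_def)
    then show ?thesis
      using definable_shifted_atom[OF G shift(1)] by (simp add: s_def)
  next
    case const
    then have "trace M N n ps (G (split_tm n t)) = {xs. length xs = n \<and> set xs \<subseteq> M \<and> c}"
      using var_part_in_M by (auto simp: trace_eq s_def)
    then show ?thesis
      using definable_const[of n c] by simp
  qed
qed

lemma shift_reducible_eq:
  assumes "b \<in> pdom N"
  shows "shift_reducible M N (\<lambda>v. v = pzero N) b"
proof (cases "b \<in> M")
  case False
  have "padd N s b \<noteq> pzero N" if "s \<in> M" for s
    using N.padd_eq_pzero_imp[of s b] that assms False by auto
  then show ?thesis
    unfolding shift_reducible_def by blast
qed (rule shift_reducible_mem)

end

section \<open>End extensions are stably embedded\<close>

locale end_extension_pair = elementary_pair +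
  assumes end_ext: "end_extension M N"
begin

lemma beyond_M: "y \<in> pdom N \<Longrightarrow> y \<notin> M \<Longrightarrow> (\<forall>m\<in>M. pless N m y) \<or> (\<forall>m\<in>M. pless N y m)"
  using end_ext by (auto simp: end_extension_def)

lemma shift_reducible_less:
  assumes "b \<in> pdom N"
  shows "shift_reducible M N (\<lambda>v. pless N v (pzero N)) b"
proof (cases "b \<in> M")
  case False
  have nb: "pneg N b \<in> pdom N"
    using assms by simp
  have "pneg N b \<notin> M"
    using closed_M(4)[of "pneg N b"] N.pneg_pneg[OF assms] False by auto
  then consider (above) "\<forall>s\<in>M. pless N s (pneg N b)" | (below) "\<forall>s\<in>M. pless N (pneg N b) s"
    using beyond_M[OF nb] by blast
  then have "\<exists>c. \<forall>s\<in>M. pless N s (pneg N b) = c"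
  proof cases
    case above
    then show ?thesis by blast
  next
    case below
    then show ?thesis
      using N.pless_asym[OF nb] by (intro exI[of _ False]) auto
  qed
  then show ?thesis
    unfolding shift_reducible_def using N.padd_pless_zero_iff assms by auto
qed (rule shift_reducible_mem)

(* The residue of b lies in [0, k), hence in M. *)
lemma shift_reducible_dvd:
  assumes "b \<in> pdom N"
  shows "shift_reducible M N (\<lambda>v. \<exists>y\<in>pdom N. nsmul N k y = v) b"
proof (cases "k = 0")
  case True
  then have "(\<lambda>v. \<exists>y\<in>pdom N. nsmul N k y = v) = (\<lambda>v. v = pzero N)"
    using N.pzero_in by (metis nsmul.simps(1))
  then show ?thesis
    using shift_reducible_eq[OF assms] by simp
next
  case False
  then obtain r where r: "r \<in> pdom N" "\<not> pless N r (pzero N)" "pless N r (nsmul N k (pone N))"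
    "\<forall>s\<in>pdom N. (\<exists>y\<in>pdom N. nsmul N k y = padd N s b) \<longleftrightarrow> (\<exists>y\<in>pdom N. nsmul N k y = padd N s r)"
    using N.residue_exists[OF _ assms] by blast
  have k_in_M: "nsmul N k (pone N) \<in> M"
    using M.nsmul_in[OF M.pone_in] by simp
  have "r \<in> M"
  proof (rule ccontr)
    assume "r \<notin> M"
    then consider "\<forall>m\<in>M. pless N m r" | "\<forall>m\<in>M. pless N r m"
      using beyond_M[OF r(1)] by blast
    then show False
    proof cases
      case 1
      then show False
        using N.pless_asym[OF r(1) _ r(3)] k_in_M by auto
    next
      case 2
      then show False
        using r(2) by auto
    qed
  qed
  then show ?thesis
    unfolding shift_reducible_def using r(4) by auto
qed

lemma definable_trace_qf:
  assumes "qfree p" "set ps \<subseteq> pdom N"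
  shows "definable (restr N M) M n (trace M N n ps (pfm_of_qf n p))"
proof -
  have "range (\<lambda>j. list_env (pzero N) ps (j - n)) \<subseteq> pdom N"
    using range_list_env[OF assms(2) N.pzero_in] by auto
  then have b_in: "teval N (\<lambda>j. list_env (pzero N) ps (j - n)) u \<in> pdom N" for u
    by (rule N.teval_in)
  have less: "definable (restr N M) M n (trace M N n ps (PLess (split_tm n t) PZero))" for t
    by (rule definable_trace_atom[where R = "\<lambda>v. pless N v (pzero N)"])
      (auto intro: shift_reducible_less b_in)
  have eq: "definable (restr N M) M n (trace M N n ps (PEq (split_tm n t) PZero))" for t
    by (rule definable_trace_atom[where R = "\<lambda>v. v = pzero N"]) (auto intro: shift_reducible_eq b_in)
  have dvd: "definable (restr N M) M n (trace M N n ps (PDvd k (split_tm n t)))" for k t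
    by (rule definable_trace_atom[where R = "\<lambda>v. \<exists>y\<in>pdom N. nsmul N k y = v"])
      (auto simp: sat_PDvd fv_PDvd intro: shift_reducible_dvd b_in)
  have true: "definable (restr N M) M n (trace M N n ps PTrue)"
    using definable_const[of n True] by (simp add: trace_def)
  from assms(1) show ?thesis
    by (induction p) (auto simp: POr_def PImp_def PIff_def less eq dvd true
        intro!: definable_trace_PNot definable_trace_PAnd)
qed

theorem stably_embedded: "stably_embedded M N"
  unfolding stably_embedded_def
proof (intro allI impI)
  fix n X
  assume "definable N (pdom N) n X"
  then obtain \<phi> ps where \<phi>: "pure \<phi>" "set ps \<subseteq> pdom N" "fv \<phi> \<subseteq> {..<n + length ps}"
    "X = {xs. length xs = n \<and> set xs \<subseteq> pdom N \<and> sat N {} (\<lambda>i. (xs @ ps) ! i) \<phi>}"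
    unfolding definable_def by blast
  obtain \<psi> where \<psi>: "qfree \<psi>"
    "\<And>e. range e \<subseteq> pdom N \<Longrightarrow> sat N {} e (pfm_of_qf n \<psi>) = sat N {} e \<phi>"
    using N.qe[OF \<phi>(1)] by blast
  have "sat N {} (\<lambda>i. (xs @ ps) ! i) \<phi> = sat N {} (list_env (pzero N) (xs @ ps)) (pfm_of_qf n \<psi>)"
    if "length xs = n" "set xs \<subseteq> M" for xs
  proof -
    have "range (list_env (pzero N) (xs @ ps)) \<subseteq> pdom N"
      using that(2) \<phi>(2) M_subset by (intro range_list_env) auto
    then show ?thesis
      using \<psi>(2) sat_list_env[of \<phi> "xs @ ps"] \<phi>(3) that(1) by simp
  qed
  then have "{xs \<in> X. set xs \<subseteq> M} = trace M N n ps (pfm_of_qf n \<psi>)"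
    unfolding \<phi>(4) trace_def using M_subset by auto
  then show "definable (restr N M) M n {xs \<in> X. set xs \<subseteq> M}"
    using definable_trace_qf[OF \<psi>(1) \<phi>(2)] by simp
qed

end

section \<open>Stably embedded pairs are end extensions\<close>

definition discrete_ivt :: "pfm \<Rightarrow> nat \<Rightarrow> nat \<Rightarrow> pfm" where
  "discrete_ivt \<chi> u v = PImp
     (PEx u (PEx v (PAnd (PLess (PVar u) (PVar v)) (PAnd (rename0 u \<chi>) (PNot (rename0 v \<chi>))))))
     (PEx 0 (PAnd \<chi> (PEx u (PAnd (PEq (PVar u) (PAdd (PVar 0) POne)) (PNot (rename0 u \<chi>))))))"

lemma sat_discrete_ivt:
  assumes "u \<notin> fv \<chi>" "v \<notin> fv \<chi>" "u \<noteq> 0" "v \<noteq> 0" "u \<noteq> v"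
  shows "sat S P e (discrete_ivt \<chi> u v) \<longleftrightarrow>
    ((\<exists>a\<in>pdom S. \<exists>b\<in>pdom S. pless S a b \<and> sat S P (e(0 := a)) \<chi> \<and> \<not> sat S P (e(0 := b)) \<chi>) \<longrightarrow>
     (\<exists>x\<in>pdom S. sat S P (e(0 := x)) \<chi> \<and>
        (\<exists>z\<in>pdom S. z = padd S x (pone S) \<and> \<not> sat S P (e(0 := z)) \<chi>)))"
proof -
  have ren_u: "sat S P (e(u := a, v := b)) (rename0 u \<chi>) \<longleftrightarrow> sat S P (e(0 := a)) \<chi>" for a b
    using assms by (simp add: sat_rename0) (rule sat_cong; use assms in auto)
  have ren_v: "sat S P (e(u := a, v := b)) (rename0 v \<chi>) \<longleftrightarrow> sat S P (e(0 := b)) \<chi>" for a b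
    using assms by (simp add: sat_rename0) (rule sat_cong; use assms in auto)
  have ren_z: "sat S P (e(0 := x, u := z)) (rename0 u \<chi>) \<longleftrightarrow> sat S P (e(0 := z)) \<chi>" for x z
    using assms by (simp add: sat_rename0) (rule sat_cong; use assms in auto)
  show ?thesis
    using assms by (simp add: discrete_ivt_def ren_u ren_v ren_z)
qed

lemma pure_discrete_ivt[simp]: "pure (discrete_ivt \<chi> u v) = pure \<chi>"
  by (simp add: discrete_ivt_def)

lemma int_discrete_ivt:
  assumes "(a :: int) < b" "P a" "\<not> P b"
  shows "\<exists>x. P x \<and> \<not> P (x + 1)"
proof (rule ccontr)
  assume step: "\<nexists>x. P x \<and> \<not> P (x + 1)"
  have "P (a + int m)" for m
  proof (induction m)
    case 0
    then show ?case using assms(2) by simp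
  next
    case (Suc m)
    have "a + int (Suc m) = (a + int m) + 1"
      by simp
    then show ?case
      using Suc step by metis
  qed
  then have "P (a + int (nat (b - a)))" .
  then show False
    using assms by simp
qed

lemma Zstruct_discrete_ivt:
  assumes "u \<notin> fv \<chi>" "v \<notin> fv \<chi>" "u \<noteq> 0" "v \<noteq> 0" "u \<noteq> v"
  shows "sat Zstruct P e (discrete_ivt \<chi> u v)"
  unfolding sat_discrete_ivt[OF assms]
  using int_discrete_ivt[where P = "\<lambda>x. sat Zstruct P (e(0 := x)) \<chi>"] by auto

lemma (in pa_model) discrete_ivt:
  assumes "pure \<chi>" "range e \<subseteq> pdom S" "a \<in> pdom S" "b \<in> pdom S" "pless S a b"
    and "sat S {} (e(0 := a)) \<chi>" "\<not> sat S {} (e(0 := b)) \<chi>"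
  shows "\<exists>d\<in>pdom S. sat S {} (e(0 := d)) \<chi> \<and> \<not> sat S {} (e(0 := padd S d (pone S))) \<chi>"
proof -
  obtain K where "\<forall>i\<in>fv \<chi>. i < K"
    using finite_nat_set_iff_bounded finite_fv by blast
  then have fresh: "Suc K \<notin> fv \<chi>" "Suc (Suc K) \<notin> fv \<chi>" "Suc K \<noteq> 0" "Suc (Suc K) \<noteq> 0"
    "Suc K \<noteq> Suc (Suc K)"
    by auto
  have "sat S {} e (discrete_ivt \<chi> (Suc K) (Suc (Suc K)))"
    by (rule sat_if_Zstruct_valid) (use assms(1,2) Zstruct_discrete_ivt[OF fresh] in auto)
  then show ?thesis
    using assms(3-7) unfolding sat_discrete_ivt[OF fresh] by auto
qed

context elementary_pair
begin

lemma stably_embedded_cut: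
  assumes "stably_embedded M N" "y \<in> pdom N"
  obtains \<chi> e where "pure \<chi>" "range e \<subseteq> M"
    "\<And>x. x \<in> M \<Longrightarrow> sat (restr N M) {} (e(0 := x)) \<chi> \<longleftrightarrow> pless N x y"
proof -
  define cut where "cut = {xs. length xs = 1 \<and> set xs \<subseteq> pdom N \<and>
      sat N {} (\<lambda>i. (xs @ [y]) ! i) (PLess (PVar 0) (PVar 1))}"
  have "definable N (pdom N) 1 cut"
    unfolding definable_def
  proof (intro exI[of _ "PLess (PVar 0) (PVar 1)"] exI[of _ "[y]"] conjI)
    show "set [y] \<subseteq> pdom N" "fv (PLess (PVar 0) (PVar 1)) \<subseteq> {..<1 + length [y]}"
      using assms(2) by auto
  qed (simp_all add: cut_def)
  then have "definable (restr N M) M 1 {xs \<in> cut. set xs \<subseteq> M}"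
    using assms(1) unfolding stably_embedded_def by blast
  then obtain \<chi> qs where \<chi>: "pure \<chi>" "set qs \<subseteq> M" "fv \<chi> \<subseteq> {..<1 + length qs}"
    "{xs \<in> cut. set xs \<subseteq> M} =
      {xs. length xs = 1 \<and> set xs \<subseteq> M \<and> sat (restr N M) {} (\<lambda>i. (xs @ qs) ! i) \<chi>}"
    unfolding definable_def restr_simps by blast
  define e where "e = list_env (pzero N) (pzero N # qs)"
  have "range e \<subseteq> M"
    unfolding e_def using \<chi>(2) by (intro range_list_env) auto
  moreover have "sat (restr N M) {} (e(0 := x)) \<chi> \<longleftrightarrow> pless N x y" if "x \<in> M" for x
  proof -
    have "sat (restr N M) {} (e(0 := x)) \<chi> = sat (restr N M) {} (\<lambda>i. ([x] @ qs) ! i) \<chi>"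
      by (rule sat_cong) (use \<chi>(3) in \<open>auto simp: e_def list_env_def nth_Cons'\<close>)
    also have "\<dots> \<longleftrightarrow> [x] \<in> {xs \<in> cut. set xs \<subseteq> M}"
      unfolding \<chi>(4) using that by simp
    also have "\<dots> \<longleftrightarrow> pless N x y"
      using that by (simp add: cut_def)
    finally show ?thesis .
  qed
  ultimately show thesis
    using that \<chi>(1) by blast
qed

theorem end_extension_if_stably_embedded:
  assumes "stably_embedded M N"
  shows "end_extension M N"
proof (rule ccontr)
  assume "\<not> end_extension M N"
  then obtain y m1 m2 where y: "y \<in> pdom N" "y \<notin> M"
    and m: "m1 \<in> M" "\<not> pless N m1 y" "m2 \<in> M" "\<not> pless N y m2"
    unfolding end_extension_def by blast
  have gap: "pless N y m1" "pless N m2 y"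
    using N.pless_linear[OF y(1), of m1] N.pless_linear[OF y(1), of m2] m y(2) by auto
  then have "pless N m2 m1"
    using N.pless_trans[of m2 y m1] m y(1) by simp
  obtain \<chi> e where \<chi>: "pure \<chi>" "range e \<subseteq> M"
    and cut: "\<And>x. x \<in> M \<Longrightarrow> sat (restr N M) {} (e(0 := x)) \<chi> \<longleftrightarrow> pless N x y"
    using stably_embedded_cut[OF assms y(1)] by blast
  have "\<exists>d\<in>M. pless N d y \<and> \<not> pless N (padd N d (pone N)) y"
    using M.discrete_ivt[of \<chi> e m2 m1] \<chi> \<open>pless N m2 m1\<close> m gap cut by simp
  then obtain d where d: "d \<in> M" "pless N d y" "\<not> pless N (padd N d (pone N)) y"
    by blast
  then have "padd N d (pone N) = y"
    using N.pless_imp_succ_le[of d y] y(1) by simp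
  then show False
    using d(1) y(2) closed_M(3)[OF d(1) closed_M(2)] by simp
qed

end

lemma stably_embedded_iff_end_extension:
  assumes "presburger_pair M N"
  shows "stably_embedded M N \<longleftrightarrow> end_extension M N"
proof
  interpret elementary_pair M N
    by (rule elementary_pair.intro[OF assms])
  show "stably_embedded M N \<Longrightarrow> end_extension M N"
    by (rule end_extension_if_stably_embedded)
  assume "end_extension M N"
  then interpret end_extension_pair M N
    by (intro end_extension_pair.intro end_extension_pair_axioms.intro elementary_pair.intro assms)
  show "stably_embedded M N"
    by (rule stably_embedded)
qed

definition end_extension_sentence :: pfm where
  "end_extension_sentence = PAll 0 (PImp (PNot (PP (PVar 0)))
     (POr (PAll 1 (PImp (PP (PVar 1)) (PLess (PVar 1) (PVar 0))))
          (PAll 1 (PImp (PP (PVar 1)) (PLess (PVar 0) (PVar 1))))))"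

lemma fv_end_extension_sentence[simp]: "fv end_extension_sentence = {}"
  by (auto simp: end_extension_sentence_def)

lemma sat_end_extension_sentence:
  "M \<subseteq> pdom N \<Longrightarrow> sat N M e end_extension_sentence \<longleftrightarrow> end_extension M N"
  by (auto simp: end_extension_sentence_def end_extension_def)

lemma stably_embedded_iff_sat_end_extension_sentence:
  assumes "presburger_pair M N"
  shows "stably_embedded M N \<longleftrightarrow> (\<forall>e. range e \<subseteq> pdom N \<longrightarrow> sat N M e end_extension_sentence)"
proof -
  interpret elementary_pair M N
    using assms by (rule elementary_pair.intro)
  have "range (\<lambda>_. pzero N) \<subseteq> pdom N"
    by auto
  then show ?thesis
    using stably_embedded_iff_end_extension[OF assms] sat_end_extension_sentence[OF M_subset] by blast
qed

theorem corollary5p7: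
  shows "(\<forall>(M :: 'a set) N. presburger_pair M N \<longrightarrow>
            (stably_embedded M N \<longleftrightarrow> end_extension M N))
       \<and> (\<exists>T :: pfm set. (\<forall>\<phi>\<in>T. fv \<phi> = {}) \<and>
            (\<forall>(M :: 'a set) N. presburger_pair M N \<longrightarrow>
               (stably_embedded M N \<longleftrightarrow>
                  (\<forall>\<phi>\<in>T. \<forall>e. range e \<subseteq> pdom N \<longrightarrow> sat N M e \<phi>))))"
proof
  show "\<forall>(M :: 'a set) N. presburger_pair M N \<longrightarrow> (stably_embedded M N \<longleftrightarrow> end_extension M N)"
    using stably_embedded_iff_end_extension by blast
  show "\<exists>T :: pfm set. (\<forall>\<phi>\<in>T. fv \<phi> = {}) \<and>
      (\<forall>(M :: 'a set) N. presburger_pair M N \<longrightarrow>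
        (stably_embedded M N \<longleftrightarrow> (\<forall>\<phi>\<in>T. \<forall>e. range e \<subseteq> pdom N \<longrightarrow> sat N M e \<phi>)))"
    by (intro exI[of _ "{end_extension_sentence}"] conjI allI impI)
      (simp_all add: stably_embedded_iff_sat_end_extension_sentence)
qed

end
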